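(* For all integers $v\ge 2$ and $t\ge 2$, $I_t(2,v)=v-1$.
   Context: A $(w,v)$ set system is a pair $(\mathcal{X},\mathcal{B})$ with $|\mathcal{X}|=v$ and $\mathcal{B}\subseteq\binom{\mathcal{X}}{w}$ (the family of all $w$-element subsets of $\mathcal{X}$); elements of $\mathcal{B}$ are blocks. For a $w$-subset $T\subseteq\mathcal{X}$ let $P_t(T)=\{\mathcal{P}\subseteq\mathcal{B}: |\mathcal{P}|\le t,\ T\subseteq\bigcup_{B\in\mathcal{P}}B\}$. The set system is a $t$-IPPS$(w,v)$ if for every $w$-subset $T\subseteq\mathcal{X}$, either $P_t(T)=\emptyset$ or $\bigcap_{\mathcal{P}\in P_t(T)}\mathcal{P}\neq\emptyset$. $I_t(w,v)$ denotes the maximum of $|\mathcal{B}|$ over all $t$-IPPS$(w,v)$. *)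

theory Defs
  imports Main
begin

definition set_system :: "nat \<Rightarrow> nat \<Rightarrow> 'a set \<Rightarrow> 'a set set \<Rightarrow> bool" where
  "set_system w v X B \<longleftrightarrow> finite X \<and> card X = v \<and> B \<subseteq> {S. S \<subseteq> X \<and> card S = w}"

definition P_t :: "nat \<Rightarrow> 'a set set \<Rightarrow> 'a set \<Rightarrow> 'a set set set" where
  "P_t t B T = {P. P \<subseteq> B \<and> card P \<le> t \<and> T \<subseteq> \<Union>P}"

definition IPPS :: "nat \<Rightarrow> nat \<Rightarrow> nat \<Rightarrow> 'a set \<Rightarrow> 'a set set \<Rightarrow> bool" where
  "IPPS t w v X B \<longleftrightarrow> set_system w v X B \<and>
     (\<forall>T. T \<subseteq> X \<and> card T = w \<longrightarrow> P_t t B T = {} \<or> \<Inter>(P_t t B T) \<noteq> {})"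

text \<open>I_t(w,v): maximum number of blocks of a t-IPPS(w,v); the ground set is taken to be
  {0..<v} without loss of generality (the property is invariant under relabelling).\<close>
definition I_t :: "nat \<Rightarrow> nat \<Rightarrow> nat \<Rightarrow> nat" where
  "I_t t w v = Max {card B | B :: nat set set. IPPS t w v {0..<v} B}"

end

theory Submission
  imports Defs
begin

text \<open>Let \<open>t \<ge> 2\<close>. If every point of a block \<open>e\<close> also lay in some other block, \<open>e\<close> would be
  covered both by \<open>{e}\<close> and by at most \<open>2\<close> blocks different from \<open>e\<close>, so the covering families
  of \<open>e\<close> would have empty intersection. Hence every block has a point lying in no other block.
  Choosing such a point for each block embeds the blocks injectively into the ground set, and
  not onto it: otherwise both points of a block would be private to it. So there are at most
  \<open>v - 1\<close> blocks, and the star of all pairs through one fixed point attains this bound.\<close>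

definition private_point :: "'a set set \<Rightarrow> 'a set \<Rightarrow> 'a \<Rightarrow> bool" where
  "private_point B e x \<longleftrightarrow> x \<in> e \<and> (\<forall>e'\<in>B. x \<in> e' \<longrightarrow> e' = e)"

definition star_system :: "'a \<Rightarrow> 'a set \<Rightarrow> 'a set set" where
  "star_system c X = (\<lambda>x. {c, x}) ` (X - {c})"

lemma private_point_if_Inter_P_t_nonempty:
  assumes "e \<in> B" and "finite e" and "card e \<le> t" and "\<Inter>(P_t t B e) \<noteq> {}"
  shows "\<exists>x. private_point B e x"
proof (rule ccontr)
  assume "\<nexists>x. private_point B e x"
  then have "\<forall>x\<in>e. \<exists>e'. e' \<in> B \<and> x \<in> e' \<and> e' \<noteq> e"
    using \<open>e \<in> B\<close> by (auto simp: private_point_def)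
  then obtain other where other: "\<forall>x\<in>e. other x \<in> B \<and> x \<in> other x \<and> other x \<noteq> e"
    by (rule bchoice[THEN exE])
  have "card (other ` e) \<le> t"
    using card_image_le[OF \<open>finite e\<close>, of other] \<open>card e \<le> t\<close> by simp
  moreover have "other ` e \<subseteq> B" "e \<subseteq> \<Union>(other ` e)" using other by auto
  ultimately have cover: "other ` e \<in> P_t t B e" by (simp add: P_t_def)
  obtain Z where Z: "Z \<in> \<Inter>(P_t t B e)" using assms(4) by blast
  with cover obtain x where "x \<in> e" "Z = other x" by blast
  then have "0 < card e" using \<open>finite e\<close> by (auto simp: card_gt_0_iff)
  with \<open>card e \<le> t\<close> \<open>e \<in> B\<close> have "{e} \<in> P_t t B e" by (simp add: P_t_def)
  with Z have "Z = e" by blast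
  with \<open>x \<in> e\<close> \<open>Z = other x\<close> other show False by blast
qed

lemma IPPS_private_point:
  assumes "IPPS t w v X B" and "w \<le> t" and "e \<in> B"
  shows "\<exists>x. private_point B e x"
proof -
  have e: "e \<subseteq> X" "card e = w" "finite X"
    using assms(1,3) by (auto simp: IPPS_def set_system_def)
  moreover have "P_t t B e \<noteq> {}"
  proof (cases "e = {}")
    case False
    with e have "0 < card e" by (metis card_gt_0_iff finite_subset)
    with e assms(2,3) have "{e} \<in> P_t t B e" by (simp add: P_t_def)
    then show ?thesis by blast
  next
    case True
    then have "{} \<in> P_t t B e" by (simp add: P_t_def)
    then show ?thesis by blast
  qed
  ultimately have "\<Inter>(P_t t B e) \<noteq> {}"
    using assms(1) by (auto simp: IPPS_def)
  with e assms(2,3) show ?thesis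
    by (intro private_point_if_Inter_P_t_nonempty) (auto intro: finite_subset)
qed

lemma card_le_if_private_points:
  assumes "finite X" and blocks: "\<And>e. e \<in> B \<Longrightarrow> e \<subseteq> X \<and> 2 \<le> card e"
    and has_private: "\<And>e. e \<in> B \<Longrightarrow> \<exists>x. private_point B e x"
  shows "card B \<le> card X - 1"
proof (cases "B = {}")
  case False
  define f where "f e = (SOME x. private_point B e x)" for e
  have f: "private_point B e (f e)" if "e \<in> B" for e
    unfolding f_def using has_private[OF that] by (rule someI_ex)
  have inj: "inj_on f B"
  proof (rule inj_onI)
    fix a b assume "a \<in> B" "b \<in> B" "f a = f b"
    with f[OF \<open>b \<in> B\<close>] have "f a \<in> b" by (simp add: private_point_def)
    with f[OF \<open>a \<in> B\<close>] \<open>b \<in> B\<close> show "a = b" by (auto simp: private_point_def)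
  qed
  have sub: "f ` B \<subseteq> X"
    using f blocks by (auto simp: private_point_def)
  have "f ` B \<noteq> X"
  proof
    assume onto: "f ` B = X"
    obtain e where "e \<in> B" using False by blast
    have "2 \<le> card e" using blocks[OF \<open>e \<in> B\<close>] by simp
    then have "finite e" "\<not> card e \<le> Suc 0" by (simp_all add: card_ge_0_finite)
    then obtain x y where "x \<in> e" "y \<in> e" "x \<noteq> y"
      using card_le_Suc0_iff_eq by blast
    have "f e = z" if "z \<in> e" for z
    proof -
      have "z \<in> f ` B" using onto blocks[OF \<open>e \<in> B\<close>] that by blast
      then obtain e' where "e' \<in> B" "z = f e'" by blast
      with f[OF \<open>e' \<in> B\<close>] \<open>e \<in> B\<close> that have "e' = e" by (auto simp: private_point_def)
      with \<open>z = f e'\<close> show ?thesis by simp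
    qed
    from this[OF \<open>x \<in> e\<close>] this[OF \<open>y \<in> e\<close>] \<open>x \<noteq> y\<close> show False by simp
  qed
  with sub have "card (f ` B) < card X"
    using \<open>finite X\<close> by (simp add: psubset_card_mono psubsetI)
  then show ?thesis using card_image[OF inj] by simp
qed simp

lemma IPPS_card_le:
  assumes "IPPS t 2 v X B" and "2 \<le> t"
  shows "card B \<le> v - 1"
proof -
  have "finite X" "card X = v" and blocks: "\<And>e. e \<in> B \<Longrightarrow> e \<subseteq> X \<and> 2 \<le> card e"
    using assms(1) by (auto simp: IPPS_def set_system_def)
  have "card B \<le> card X - 1"
    by (rule card_le_if_private_points[OF \<open>finite X\<close> blocks IPPS_private_point[OF assms]])
  with \<open>card X = v\<close> show ?thesis by simp
qed

lemma card_star_system: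
  assumes "finite X" and "c \<in> X"
  shows "card (star_system c X) = card X - 1"
proof -
  have "inj_on (\<lambda>x. {c, x}) (X - {c})"
    by (rule inj_onI) (auto simp: doubleton_eq_iff)
  then show ?thesis
    using assms by (simp add: star_system_def card_image)
qed

lemma IPPS_star_system:
  assumes "finite X" and "c \<in> X"
  shows "IPPS t 2 (card X) X (star_system c X)"
proof -
  have "\<Inter>(P_t t (star_system c X) T) \<noteq> {}" if "card T = 2" for T
  proof -
    obtain a b where "T = {a, b}" "a \<noteq> b"
      using \<open>card T = 2\<close> by (meson card_2_iff)
    then obtain w where w: "w \<in> T" "w \<noteq> c" by (cases "a = c") auto
    have "{c, w} \<in> P" if "P \<in> P_t t (star_system c X) T" for P
    proof -
      from that have "P \<subseteq> star_system c X" "T \<subseteq> \<Union>P" by (auto simp: P_t_def)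
      with w obtain E where "E \<in> P" "w \<in> E" "E \<in> star_system c X" by blast
      with w have "E = {c, w}" by (auto simp: star_system_def)
      with \<open>E \<in> P\<close> show ?thesis by simp
    qed
    then show ?thesis by blast
  qed
  moreover have "set_system 2 (card X) X (star_system c X)"
    using assms by (auto simp: set_system_def star_system_def)
  ultimately show ?thesis unfolding IPPS_def by blast
qed

theorem theorem3:
  fixes v t :: nat
  assumes "v \<ge> 2" and "t \<ge> 2"
  shows "I_t t 2 v = v - 1"
proof -
  let ?S = "{card B | B :: nat set set. IPPS t 2 v {0..<v} B}"
  have bound: "n \<le> v - 1" if "n \<in> ?S" for n
    using that IPPS_card_le[OF _ \<open>t \<ge> 2\<close>] by blast
  then have "?S \<subseteq> {..v - 1}" by blast
  then have "finite ?S" by (rule finite_subset) simp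
  moreover have "v - 1 \<in> ?S"
  proof -
    have X: "finite {0..<v}" "(0::nat) \<in> {0..<v}" "card {0..<v} = v"
      using \<open>v \<ge> 2\<close> by auto
    have "IPPS t 2 v {0..<v} (star_system 0 {0..<v})"
      using IPPS_star_system[OF X(1,2), of t] unfolding X(3) .
    moreover have "card (star_system 0 {0..<v}) = v - 1"
      using card_star_system[OF X(1,2)] unfolding X(3) .
    ultimately show ?thesis
      unfolding mem_Collect_eq by (intro exI[of _ "star_system 0 {0..<v}"] conjI) simp_all
  qed
  ultimately show ?thesis
    unfolding I_t_def using bound by (intro Max_eqI) auto
qed

end
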